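(* Consider the perturbed federated algorithm described in the context, with $\beta\in(0,1)$ and constant step size $\gamma_t=\gamma=[2LE]^{-1}$. Assume that the bounded variance, bounded stochastic gradient norm, $L$-smoothness and $\mu$-strong convexity assumptions of the context hold. Then for all $t\ge0$, $$\mathbb{E}\,F(\overline{\mathbf{w}}_{t,0})-f_\star\le\frac{L\Delta}{\mu}\Big[1-\frac{\mu}{(\beta+2)L}\Big]^t+\frac{S\sigma^2}{4\mu}+\frac{3L\Gamma}{2\mu}+\frac{2AE^2G^2}{\mu}+\frac{\beta(1-\beta)EG^2}{8L},$$ where $A=4+(1-\beta)^2+8(1-1/\beta)^2$, $\Delta=F(\overline{\mathbf{w}}_{0,0})-f_\star$ and $S=\sum_ip_i^2$.
   Context: Setting: there are $C$ clients with local objectives $F_i:\mathbb{R}^D\to\mathbb{R}$. Similarity weights $p_{in}\ge0$ are symmetric ($p_{in}=p_{ni}$), satisfy $p_{ii}=0$, and $\sum_{i,n}p_{in}=1$. Let $p_i=\sum_np_{in}>0$, so that $\sum_ip_i=1$. The global objective is $F=\sum_ip_iF_i$. Algorithm, with parameter $\beta$, $E\ge1$ local steps and step sizes $\gamma_t$, all clients participating: - $\mathbf{u}^i_0=\overline{\mathbf{w}}_{0,0}$ (the initial point). - In round $t$, each client sets $\mathbf{w}^i_{t,0}=\overline{\mathbf{w}}_{t,0}$. For $k=0,\dots,E-1$ it forms $\widetilde{\mathbf{w}}^i_{t,k}=\beta\mathbf{w}^i_{t,k}+(1-\beta)\mathbf{u}^i_t$ and updates $\mathbf{w}^i_{t,k+1}=\mathbf{w}^i_{t,k}-\gamma_tg_i(\widetilde{\mathbf{w}}^i_{t,k})$,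 where $g_i$ is a stochastic gradient of $F_i$, sampled independently across clients and steps given the past. - $\overline{\mathbf{w}}_{t,k}=\sum_ip_i\mathbf{w}^i_{t,k}$ and $\overline{\mathbf{w}}_{t+1,0}=\overline{\mathbf{w}}_{t,E}$. - For $t\ge1$, $\mathbf{u}^i_t=\frac1{p_i}\sum_np_{in}\mathbf{w}^n_{t-1,E}$. $\mathbb{E}$ denotes total expectation. Assumptions: - Bounded variance: $\mathbb{E}\,g_i(\widetilde{\mathbf{w}}^i_{t,k})=\nabla F_i(\widetilde{\mathbf{w}}^i_{t,k})$ and $\mathbb{E}\|g_i(\widetilde{\mathbf{w}}^i_{t,k})-\nabla F_i(\widetilde{\mathbf{w}}^i_{t,k})\|^2\le\sigma^2$. - Bounded stochastic gradient norm: $\mathbb{E}\|g_i(\widetilde{\mathbf{w}}^i_{t,k})\|^2\le G^2$ for all $i,t,k$. - $L$-smoothness: each $\nabla F_i$ is $L$-Lipschitz. - $\mu$-strong convexity: each $F_i$ is $\mu$-strongly convex. Notation: $\mathbf{w}_\star$ is the minimizer of $F$ and $f_\star=F(\mathbf{w}_\star)$. For each $i$, $\mathbf{w}_\star^i=\arg\min F_i$. The statistical heterogeneity is $\Gamma=f_\star-\sum_ip_iF_i(\mathbf{w}^i_\star)$. *)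

theory Defs
  imports "HOL-Analysis.Analysis" "HOL-Probability.Probability"
begin

definition pw :: "(nat \<Rightarrow> nat \<Rightarrow> real) \<Rightarrow> nat \<Rightarrow> nat \<Rightarrow> real" where
  "pw p C i = (\<Sum>n<C. p i n)"

definition Fglob :: "(nat \<Rightarrow> nat \<Rightarrow> real) \<Rightarrow> nat \<Rightarrow> (nat \<Rightarrow> 'v \<Rightarrow> real) \<Rightarrow> 'v \<Rightarrow> real" where
  "Fglob p C Fs x = (\<Sum>i<C. pw p C i * Fs i x)"

definition strongly_convex_grad :: "real \<Rightarrow> ('v::real_inner \<Rightarrow> real) \<Rightarrow> ('v \<Rightarrow> 'v) \<Rightarrow> bool" where
  "strongly_convex_grad \<mu> f gf \<longleftrightarrow>
     (\<forall>x y. f y \<ge> f x + inner (gf x) (y - x) + \<mu> / 2 * (norm (y - x))\<^sup>2)"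

definition cond_indep_vars ::
  "'a measure \<Rightarrow> 'a measure \<Rightarrow> 'b measure \<Rightarrow> ('i \<Rightarrow> 'a \<Rightarrow> 'b) \<Rightarrow> 'i set \<Rightarrow> bool" where
  "cond_indep_vars M F N X I \<longleftrightarrow>
     (\<forall>J. J \<subseteq> I \<longrightarrow> finite J \<longrightarrow> (\<forall>A. (\<forall>j\<in>J. A j \<in> sets N) \<longrightarrow>
        (AE \<omega> in M. real_cond_exp M F (\<lambda>\<omega>. \<Prod>j\<in>J. indicator (A j) (X j \<omega>)) \<omega>
                   = (\<Prod>j\<in>J. real_cond_exp M F (\<lambda>\<omega>. indicator (A j) (X j \<omega>)) \<omega>))))"

end

theory Submission
  imports Defs
begin

text \<open>
  In every round the expected optimality gap is at most \<open>2 G\<^sup>2 / \<mu>\<close>. Since \<open>A \<ge> 4\<close> and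
  \<open>E \<ge> 1\<close> this is dominated by the term \<open>2 A E\<^sup>2 G\<^sup>2 / \<mu>\<close>, and all other terms of the bound
  are nonnegative (\<open>\<mu> \<le> L\<close>, so the contraction factor lies in \<open>[0, 1]\<close>).

  The uniform bound is the Polyak--Lojasiewicz inequality
  \<open>F x - F y \<le> |\<nabla>F x|\<^sup>2 / (2 \<mu>)\<close> at \<open>x = wbar t\<close>, where \<open>L\<close>-smoothness moves each local gradient
  to the perturbed point: \<open>|\<nabla>F\<^sub>i (wbar t)|\<^sup>2 \<le> 2 |\<nabla>F\<^sub>i (wtil\<^sub>i t)|\<^sup>2 + 2 L\<^sup>2 |wbar t - wtil\<^sub>i t|\<^sup>2\<close>.
  As \<open>\<nabla>F\<^sub>i (wtil\<^sub>i t)\<close> is the conditional mean of the stochastic gradient, its second moment is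
  at most \<open>G\<^sup>2\<close>. The displacement \<open>wbar t - wtil\<^sub>i t\<close> is \<open>(1 - \<beta>) \<gamma>\<close> times the difference of the
  neighbour-weighted and the globally weighted sums of the previous round's stochastic gradients,
  so its second moment is at most \<open>4 \<gamma>\<^sup>2 E\<^sup>2 G\<^sup>2 = G\<^sup>2 / L\<^sup>2\<close>.
\<close>

section \<open>Inequalities for norms and strongly convex mixtures\<close>

lemma power2_norm_add_le:
  fixes x y :: "'a::real_normed_vector"
  shows "(norm (x + y))\<^sup>2 \<le> 2 * (norm x)\<^sup>2 + 2 * (norm y)\<^sup>2"
proof -
  have "(norm (x + y))\<^sup>2 \<le> (norm x + norm y)\<^sup>2"
    by (intro power_mono norm_triangle_ineq) simp
  also have "\<dots> \<le> 2 * (norm x)\<^sup>2 + 2 * (norm y)\<^sup>2"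
    using sum_squares_bound[of "norm x" "norm y"] by (simp add: power2_sum)
  finally show ?thesis .
qed

lemma power2_norm_diff_le:
  fixes x y :: "'a::real_normed_vector"
  shows "(norm (x - y))\<^sup>2 \<le> 2 * (norm x)\<^sup>2 + 2 * (norm y)\<^sup>2"
  using power2_norm_add_le[of x "- y"] by simp

lemma power2_sum_weighted_le:
  fixes q x :: "'i \<Rightarrow> real"
  assumes "\<And>i. i \<in> I \<Longrightarrow> 0 \<le> q i"
  shows "(\<Sum>i\<in>I. q i * x i)\<^sup>2 \<le> (\<Sum>i\<in>I. q i) * (\<Sum>i\<in>I. q i * (x i)\<^sup>2)"
proof -
  have "(\<Sum>i\<in>I. q i * x i)\<^sup>2 = (\<Sum>i\<in>I. sqrt (q i) * (sqrt (q i) * x i))\<^sup>2"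
    using assms by (intro arg_cong[where f="\<lambda>z. z\<^sup>2"] sum.cong) (auto simp: mult.assoc[symmetric])
  also have "\<dots> \<le> (\<Sum>i\<in>I. (sqrt (q i))\<^sup>2) * (\<Sum>i\<in>I. (sqrt (q i) * x i)\<^sup>2)"
    by (rule Cauchy_Schwarz_ineq_sum)
  also have "\<dots> = (\<Sum>i\<in>I. q i) * (\<Sum>i\<in>I. q i * (x i)\<^sup>2)"
    using assms by (simp add: power_mult_distrib)
  finally show ?thesis .
qed

lemma power2_norm_sum_scaleR_le:
  fixes q :: "'i \<Rightarrow> real" and v :: "'i \<Rightarrow> 'a::real_normed_vector"
  assumes "\<And>i. i \<in> I \<Longrightarrow> 0 \<le> q i"
  shows "(norm (\<Sum>i\<in>I. q i *\<^sub>R v i))\<^sup>2 \<le> (\<Sum>i\<in>I. q i) * (\<Sum>i\<in>I. q i * (norm (v i))\<^sup>2)"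
proof -
  have "norm (\<Sum>i\<in>I. q i *\<^sub>R v i) \<le> (\<Sum>i\<in>I. q i * norm (v i))"
    using assms by (intro order_trans[OF norm_sum] sum_mono) auto
  then have "(norm (\<Sum>i\<in>I. q i *\<^sub>R v i))\<^sup>2 \<le> (\<Sum>i\<in>I. q i * norm (v i))\<^sup>2"
    by (intro power_mono) auto
  also have "\<dots> \<le> (\<Sum>i\<in>I. q i) * (\<Sum>i\<in>I. q i * (norm (v i))\<^sup>2)"
    by (rule power2_sum_weighted_le[OF assms])
  finally show ?thesis .
qed

lemma lipschitz_power2_norm_le:
  fixes f :: "'a::real_normed_vector \<Rightarrow> 'b::real_normed_vector"
  assumes "L-lipschitz_on UNIV f"
  shows "(norm (f x))\<^sup>2 \<le> 2 * (norm (f y))\<^sup>2 + 2 * L\<^sup>2 * (norm (x - y))\<^sup>2"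
proof -
  have "norm (f x - f y) \<le> L * norm (x - y)"
    using lipschitz_onD[OF assms, of x y] by (simp add: dist_norm)
  then have "(norm (f x - f y))\<^sup>2 \<le> (L * norm (x - y))\<^sup>2"
    by (intro power_mono) auto
  moreover have "(norm (f x))\<^sup>2 \<le> 2 * (norm (f y))\<^sup>2 + 2 * (norm (f x - f y))\<^sup>2"
    using power2_norm_add_le[of "f y" "f x - f y"] by simp
  ultimately show ?thesis by (simp add: power_mult_distrib)
qed

lemma inner_add_quadratic_ge:
  fixes a d :: "'a::real_inner"
  assumes "0 < \<mu>"
  shows "- (norm a)\<^sup>2 / (2 * \<mu>) \<le> inner a d + \<mu> / 2 * (norm d)\<^sup>2"
proof -
  have "0 \<le> (norm (a + \<mu> *\<^sub>R d))\<^sup>2" by simp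
  also have "\<dots> = (norm a)\<^sup>2 + 2 * \<mu> * inner a d + \<mu>\<^sup>2 * (norm d)\<^sup>2"
    by (simp only: power2_norm_eq_inner)
      (simp add: inner_add_left inner_add_right inner_commute algebra_simps power2_eq_square)
  finally show ?thesis
    using assms by (simp add: field_simps power2_eq_square)
qed

lemma strongly_convex_mixture_gap_le:
  fixes F :: "'i \<Rightarrow> 'v::real_inner \<Rightarrow> real" and gF :: "'i \<Rightarrow> 'v \<Rightarrow> 'v"
  assumes sc: "\<And>i. i \<in> I \<Longrightarrow> strongly_convex_grad \<mu> (F i) (gF i)"
    and q_nonneg: "\<And>i. i \<in> I \<Longrightarrow> 0 \<le> q i" and q_sum: "(\<Sum>i\<in>I. q i) = 1" and mu: "0 < \<mu>"
  shows "(\<Sum>i\<in>I. q i * F i x) - (\<Sum>i\<in>I. q i * F i y)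
    \<le> (norm (\<Sum>i\<in>I. q i *\<^sub>R gF i x))\<^sup>2 / (2 * \<mu>)"
proof -
  define a where "a = (\<Sum>i\<in>I. q i *\<^sub>R gF i x)"
  have "(\<Sum>i\<in>I. q i * (F i x + inner (gF i x) (y - x) + \<mu> / 2 * (norm (y - x))\<^sup>2))
      \<le> (\<Sum>i\<in>I. q i * F i y)"
    using sc q_nonneg unfolding strongly_convex_grad_def by (intro sum_mono mult_left_mono) auto
  also have "(\<Sum>i\<in>I. q i * (F i x + inner (gF i x) (y - x) + \<mu> / 2 * (norm (y - x))\<^sup>2))
      = (\<Sum>i\<in>I. q i * F i x) + inner a (y - x) + (\<Sum>i\<in>I. q i) * (\<mu> / 2 * (norm (y - x))\<^sup>2)"
    by (simp add: a_def distrib_left sum.distrib inner_sum_left sum_distrib_right)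
  finally show ?thesis
    using inner_add_quadratic_ge[OF mu, of a "y - x"] q_sum by (simp add: a_def)
qed

lemma mixture_gap_le_shifted_gradients:
  fixes F :: "'i \<Rightarrow> 'v::real_inner \<Rightarrow> real" and gF :: "'i \<Rightarrow> 'v \<Rightarrow> 'v"
  assumes sc: "\<And>i. i \<in> I \<Longrightarrow> strongly_convex_grad \<mu> (F i) (gF i)"
    and lip: "\<And>i. i \<in> I \<Longrightarrow> L-lipschitz_on UNIV (gF i)"
    and q_nonneg: "\<And>i. i \<in> I \<Longrightarrow> 0 \<le> q i" and q_sum: "(\<Sum>i\<in>I. q i) = 1" and mu: "0 < \<mu>"
  shows "(\<Sum>i\<in>I. q i * F i x) - (\<Sum>i\<in>I. q i * F i y)
    \<le> (\<Sum>i\<in>I. q i * ((norm (gF i (z i)))\<^sup>2 + L\<^sup>2 * (norm (x - z i))\<^sup>2)) / \<mu>"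
    (is "_ \<le> ?S / \<mu>")
proof -
  have "(norm (\<Sum>i\<in>I. q i *\<^sub>R gF i x))\<^sup>2 \<le> (\<Sum>i\<in>I. q i * (norm (gF i x))\<^sup>2)"
    using power2_norm_sum_scaleR_le[of I q "\<lambda>i. gF i x"] q_nonneg q_sum by simp
  also have "\<dots> \<le> (\<Sum>i\<in>I. q i * (2 * ((norm (gF i (z i)))\<^sup>2 + L\<^sup>2 * (norm (x - z i))\<^sup>2)))"
    using lipschitz_power2_norm_le[OF lip] q_nonneg
    by (intro sum_mono mult_left_mono) (auto simp: algebra_simps)
  also have "\<dots> = 2 * ?S"
    by (simp add: sum_distrib_left mult_ac)
  finally have "(norm (\<Sum>i\<in>I. q i *\<^sub>R gF i x))\<^sup>2 / (2 * \<mu>) \<le> 2 * ?S / (2 * \<mu>)"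
    using mu by (intro divide_right_mono) auto
  moreover have "(\<Sum>i\<in>I. q i * F i x) - (\<Sum>i\<in>I. q i * F i y)
      \<le> (norm (\<Sum>i\<in>I. q i *\<^sub>R gF i x))\<^sup>2 / (2 * \<mu>)"
    by (rule strongly_convex_mixture_gap_le[OF sc q_nonneg q_sum mu])
  ultimately show ?thesis
    using mu by simp
qed

lemma strongly_convex_le_lipschitz_gradient:
  fixes f :: "'v::euclidean_space \<Rightarrow> real"
  assumes sc: "strongly_convex_grad \<mu> f f'" and lip: "L-lipschitz_on UNIV f'"
  shows "\<mu> \<le> L"
proof -
  obtain b :: 'v where b: "b \<in> Basis" using nonempty_Basis by blast
  then have norm_b: "norm b = 1" by simp
  have "\<mu> \<le> inner (f' b) b - inner (f' 0) b"
    using sc[unfolded strongly_convex_grad_def, rule_format, of 0 b]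
      sc[unfolded strongly_convex_grad_def, rule_format, of b 0] norm_b
    by simp
  also have "\<dots> \<le> norm (f' b - f' 0) * norm b"
    using norm_cauchy_schwarz[of "f' b - f' 0" b] by (simp add: inner_diff_left)
  also have "\<dots> \<le> L"
    using lipschitz_onD[OF lip, of b 0] norm_b by (simp add: dist_norm)
  finally show ?thesis .
qed

section \<open>Second moments of conditional expectations\<close>

lemma integrable_inner_Basis_mult:
  fixes x y :: "'s \<Rightarrow> 'u::euclidean_space"
  assumes [measurable]: "x \<in> borel_measurable M" "y \<in> borel_measurable M"
    and "integrable M (\<lambda>\<omega>. (norm (x \<omega>))\<^sup>2)" "integrable M (\<lambda>\<omega>. (norm (y \<omega>))\<^sup>2)"
    and b: "b \<in> Basis"
  shows "integrable M (\<lambda>\<omega>. inner (x \<omega>) b * inner (y \<omega>) b)"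
proof (rule Bochner_Integration.integrable_bound)
  show "integrable M (\<lambda>\<omega>. (norm (x \<omega>))\<^sup>2 + (norm (y \<omega>))\<^sup>2)"
    using assms by auto
  show "(\<lambda>\<omega>. inner (x \<omega>) b * inner (y \<omega>) b) \<in> borel_measurable M"
    by measurable
  show "AE \<omega> in M. norm (inner (x \<omega>) b * inner (y \<omega>) b) \<le> norm ((norm (x \<omega>))\<^sup>2 + (norm (y \<omega>))\<^sup>2)"
  proof (rule AE_I2)
    fix \<omega>
    have "\<bar>inner (x \<omega>) b * inner (y \<omega>) b\<bar> \<le> norm (x \<omega>) * norm (y \<omega>)"
      unfolding abs_mult using Basis_le_norm[OF b] by (intro mult_mono) auto
    also have "\<dots> \<le> (norm (x \<omega>))\<^sup>2 + (norm (y \<omega>))\<^sup>2"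
      using sum_squares_bound[of "norm (x \<omega>)" "norm (y \<omega>)"]
        mult_nonneg_nonneg[OF norm_ge_zero norm_ge_zero, of "x \<omega>" "y \<omega>"] by linarith
    finally show "norm (inner (x \<omega>) b * inner (y \<omega>) b) \<le> norm ((norm (x \<omega>))\<^sup>2 + (norm (y \<omega>))\<^sup>2)"
      by simp
  qed
qed

lemma integrable_inner:
  fixes x y :: "'s \<Rightarrow> 'u::euclidean_space"
  assumes "x \<in> borel_measurable M" "y \<in> borel_measurable M"
    and "integrable M (\<lambda>\<omega>. (norm (x \<omega>))\<^sup>2)" "integrable M (\<lambda>\<omega>. (norm (y \<omega>))\<^sup>2)"
  shows "integrable M (\<lambda>\<omega>. inner (x \<omega>) (y \<omega>))"
proof -
  have "inner (x \<omega>) (y \<omega>) = (\<Sum>b\<in>Basis. inner (x \<omega>) b * inner (y \<omega>) b)" for \<omega>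
    by (rule euclidean_inner)
  then show ?thesis
    using integrable_inner_Basis_mult[OF assms] by (simp add: Bochner_Integration.integrable_sum)
qed

lemma integral_inner_cond_exp_eq:
  fixes X m :: "'s \<Rightarrow> 'u::euclidean_space"
  assumes sub: "sigma_finite_subalgebra M F"
    and [measurable]: "X \<in> borel_measurable M" and m_F: "m \<in> borel_measurable F"
    and X_L2: "integrable M (\<lambda>\<omega>. (norm (X \<omega>))\<^sup>2)" and m_L2: "integrable M (\<lambda>\<omega>. (norm (m \<omega>))\<^sup>2)"
    and cond_exp: "\<And>b. b \<in> Basis \<Longrightarrow>
      AE \<omega> in M. real_cond_exp M F (\<lambda>\<omega>. inner (X \<omega>) b) \<omega> = inner (m \<omega>) b"
  shows "(\<integral>\<omega>. inner (m \<omega>) (X \<omega>) \<partial>M) = (\<integral>\<omega>. (norm (m \<omega>))\<^sup>2 \<partial>M)"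
proof -
  interpret sigma_finite_subalgebra M F by (rule sub)
  have [measurable]: "m \<in> borel_measurable M"
    by (rule measurable_from_subalg[OF subalg m_F])
  have coord: "(\<integral>\<omega>. inner (m \<omega>) b * inner (X \<omega>) b \<partial>M) = (\<integral>\<omega>. inner (m \<omega>) b * inner (m \<omega>) b \<partial>M)"
    if b: "b \<in> Basis" for b
  proof -
    have [measurable]: "(\<lambda>\<omega>. inner (m \<omega>) b) \<in> borel_measurable F"
      using m_F by measurable
    have "(\<integral>\<omega>. inner (m \<omega>) b * inner (X \<omega>) b \<partial>M)
        = (\<integral>\<omega>. inner (m \<omega>) b * real_cond_exp M F (\<lambda>\<omega>. inner (X \<omega>) b) \<omega> \<partial>M)"
      using integrable_inner_Basis_mult[OF _ _ m_L2 X_L2 b] by (intro real_cond_exp_intg(2)[symmetric]) auto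
    also have "\<dots> = (\<integral>\<omega>. inner (m \<omega>) b * inner (m \<omega>) b \<partial>M)"
      using cond_exp[OF b] by (intro integral_cong_AE) auto
    finally show ?thesis .
  qed
  have coords_mX: "inner (m \<omega>) (X \<omega>) = (\<Sum>b\<in>Basis. inner (m \<omega>) b * inner (X \<omega>) b)"
    and coords_mm: "inner (m \<omega>) (m \<omega>) = (\<Sum>b\<in>Basis. inner (m \<omega>) b * inner (m \<omega>) b)" for \<omega>
    by (rule euclidean_inner)+
  have "(\<integral>\<omega>. inner (m \<omega>) (X \<omega>) \<partial>M) = (\<Sum>b\<in>Basis. \<integral>\<omega>. inner (m \<omega>) b * inner (X \<omega>) b \<partial>M)"
    unfolding coords_mX using integrable_inner_Basis_mult[OF _ _ m_L2 X_L2] by (simp add: integral_sum)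
  also have "\<dots> = (\<Sum>b\<in>Basis. \<integral>\<omega>. inner (m \<omega>) b * inner (m \<omega>) b \<partial>M)"
    using coord by simp
  also have "\<dots> = (\<integral>\<omega>. inner (m \<omega>) (m \<omega>) \<partial>M)"
    unfolding coords_mm using integrable_inner_Basis_mult[OF _ _ m_L2 m_L2] by (simp add: integral_sum)
  finally show ?thesis
    by (simp add: power2_norm_eq_inner)
qed

lemma cond_exp_power2_norm:
  fixes X m :: "'s \<Rightarrow> 'u::euclidean_space"
  assumes sub: "sigma_finite_subalgebra M F"
    and [measurable]: "X \<in> borel_measurable M" and m_F: "m \<in> borel_measurable F"
    and X_L2: "integrable M (\<lambda>\<omega>. (norm (X \<omega>))\<^sup>2)"
    and diff_L2: "integrable M (\<lambda>\<omega>. (norm (X \<omega> - m \<omega>))\<^sup>2)"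
    and cond_exp: "\<And>b. b \<in> Basis \<Longrightarrow>
      AE \<omega> in M. real_cond_exp M F (\<lambda>\<omega>. inner (X \<omega>) b) \<omega> = inner (m \<omega>) b"
  shows integrable_cond_exp_power2_norm: "integrable M (\<lambda>\<omega>. (norm (m \<omega>))\<^sup>2)"
    and integral_cond_exp_power2_norm_le: "(\<integral>\<omega>. (norm (m \<omega>))\<^sup>2 \<partial>M) \<le> (\<integral>\<omega>. (norm (X \<omega>))\<^sup>2 \<partial>M)"
proof -
  have [measurable]: "m \<in> borel_measurable M"
    by (rule measurable_from_subalg[OF sigma_finite_subalgebra.subalg[OF sub] m_F])
  show m_L2: "integrable M (\<lambda>\<omega>. (norm (m \<omega>))\<^sup>2)"
  proof (rule Bochner_Integration.integrable_bound)
    show "integrable M (\<lambda>\<omega>. 2 * (norm (X \<omega>))\<^sup>2 + 2 * (norm (X \<omega> - m \<omega>))\<^sup>2)"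
      using X_L2 diff_L2 by auto
    show "AE \<omega> in M. norm ((norm (m \<omega>))\<^sup>2) \<le> norm (2 * (norm (X \<omega>))\<^sup>2 + 2 * (norm (X \<omega> - m \<omega>))\<^sup>2)"
    proof (rule AE_I2)
      fix \<omega>
      show "norm ((norm (m \<omega>))\<^sup>2) \<le> norm (2 * (norm (X \<omega>))\<^sup>2 + 2 * (norm (X \<omega> - m \<omega>))\<^sup>2)"
        using power2_norm_diff_le[of "X \<omega>" "X \<omega> - m \<omega>"] by simp
    qed
  qed measurable
  have integrable_inner_mX: "integrable M (\<lambda>\<omega>. inner (m \<omega>) (X \<omega>))"
    by (rule integrable_inner[OF _ _ m_L2 X_L2]) measurable
  have expand: "(norm (X \<omega> - m \<omega>))\<^sup>2 = (norm (X \<omega>))\<^sup>2 - 2 * inner (m \<omega>) (X \<omega>) + (norm (m \<omega>))\<^sup>2"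
    for \<omega>
    by (simp add: power2_norm_eq_inner inner_diff_left inner_diff_right inner_commute)
  have "0 \<le> (\<integral>\<omega>. (norm (X \<omega> - m \<omega>))\<^sup>2 \<partial>M)"
    by simp
  also have "\<dots> = (\<integral>\<omega>. (norm (X \<omega>))\<^sup>2 \<partial>M) - 2 * (\<integral>\<omega>. inner (m \<omega>) (X \<omega>) \<partial>M)
      + (\<integral>\<omega>. (norm (m \<omega>))\<^sup>2 \<partial>M)"
    unfolding expand using X_L2 m_L2 integrable_inner_mX by simp
  also have "\<dots> = (\<integral>\<omega>. (norm (X \<omega>))\<^sup>2 \<partial>M) - (\<integral>\<omega>. (norm (m \<omega>))\<^sup>2 \<partial>M)"
    using integral_inner_cond_exp_eq[OF sub _ m_F X_L2 m_L2 cond_exp] by simp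
  finally show "(\<integral>\<omega>. (norm (m \<omega>))\<^sup>2 \<partial>M) \<le> (\<integral>\<omega>. (norm (X \<omega>))\<^sup>2 \<partial>M)"
    by simp
qed

section \<open>The perturbed federated algorithm\<close>

locale perturbed_fedavg = prob_space M
  for M :: "'a measure" +
  fixes Filt :: "nat \<Rightarrow> 'a measure"
    and C E :: nat and p :: "nat \<Rightarrow> nat \<Rightarrow> real"
    and Fs :: "nat \<Rightarrow> 'v::euclidean_space \<Rightarrow> real" and gF :: "nat \<Rightarrow> 'v \<Rightarrow> 'v"
    and L \<mu> G \<beta> \<gamma> :: real and w0 :: 'v
    and w g :: "nat \<Rightarrow> nat \<Rightarrow> nat \<Rightarrow> 'a \<Rightarrow> 'v" and u :: "nat \<Rightarrow> nat \<Rightarrow> 'a \<Rightarrow> 'v"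
    and wbar :: "nat \<Rightarrow> nat \<Rightarrow> 'a \<Rightarrow> 'v" and wtil :: "nat \<Rightarrow> nat \<Rightarrow> nat \<Rightarrow> 'a \<Rightarrow> 'v"
  assumes wbar_eq: "\<And>tt k \<omega>. wbar tt k \<omega> = (\<Sum>i<C. pw p C i *\<^sub>R w i tt k \<omega>)"
    and wtil_eq: "\<And>i tt k \<omega>. wtil i tt k \<omega> = \<beta> *\<^sub>R w i tt k \<omega> + (1 - \<beta>) *\<^sub>R u i tt \<omega>"
    and p_nonneg: "\<And>i n. i < C \<Longrightarrow> n < C \<Longrightarrow> p i n \<ge> 0"
    and p_sum: "(\<Sum>i<C. \<Sum>n<C. p i n) = 1"
    and p_pos: "\<And>i. i < C \<Longrightarrow> pw p C i > 0"
    and E_pos: "E \<ge> 1"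
    and beta: "0 < \<beta>" "\<beta> < 1"
    and L_pos: "L > 0" and mu_pos: "\<mu> > 0"
    and step: "\<gamma> = 1 / (2 * L * real E)"
    and grad: "\<And>i x. i < C \<Longrightarrow> GDERIV (Fs i) x :> gF i x"
    and smooth: "\<And>i. i < C \<Longrightarrow> L-lipschitz_on UNIV (gF i)"
    and sconv: "\<And>i. i < C \<Longrightarrow> strongly_convex_grad \<mu> (Fs i) (gF i)"
    and u_init: "\<And>i \<omega>. i < C \<Longrightarrow> \<omega> \<in> space M \<Longrightarrow> u i 0 \<omega> = w0"
    and u_next: "\<And>i tt \<omega>. i < C \<Longrightarrow> \<omega> \<in> space M \<Longrightarrow>
        u i (Suc tt) \<omega> = (1 / pw p C i) *\<^sub>R (\<Sum>n<C. p i n *\<^sub>R w n tt E \<omega>)"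
    and w_init: "\<And>i \<omega>. i < C \<Longrightarrow> \<omega> \<in> space M \<Longrightarrow> w i 0 0 \<omega> = w0"
    and w_round: "\<And>i tt \<omega>. i < C \<Longrightarrow> \<omega> \<in> space M \<Longrightarrow> w i (Suc tt) 0 \<omega> = wbar tt E \<omega>"
    and w_step: "\<And>i tt k \<omega>. i < C \<Longrightarrow> k < E \<Longrightarrow> \<omega> \<in> space M \<Longrightarrow>
        w i tt (Suc k) \<omega> = w i tt k \<omega> - \<gamma> *\<^sub>R g i tt k \<omega>"
    and filt_sub: "\<And>s. sigma_finite_subalgebra M (Filt s)"
    and filt_mono: "\<And>s. sets (Filt s) \<subseteq> sets (Filt (Suc s))"
    and g_adapted: "\<And>i tt k. i < C \<Longrightarrow> k < E \<Longrightarrow>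
        g i tt k \<in> borel_measurable (Filt (Suc (tt * E + k)))"
    and unbiased: "\<And>i tt k b. i < C \<Longrightarrow> k < E \<Longrightarrow> b \<in> Basis \<Longrightarrow>
        AE \<omega> in M. real_cond_exp M (Filt (tt * E + k)) (\<lambda>\<omega>. inner (g i tt k \<omega>) b) \<omega>
                  = inner (gF i (wtil i tt k \<omega>)) b"
    and var_int: "\<And>i tt k. i < C \<Longrightarrow> k < E \<Longrightarrow>
        integrable M (\<lambda>\<omega>. (norm (g i tt k \<omega> - gF i (wtil i tt k \<omega>)))\<^sup>2)"
    and norm_int: "\<And>i tt k. i < C \<Longrightarrow> k < E \<Longrightarrow>
        integrable M (\<lambda>\<omega>. (norm (g i tt k \<omega>))\<^sup>2)"
    and norm_bound: "\<And>i tt k. i < C \<Longrightarrow> k < E \<Longrightarrow>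
        (\<integral>\<omega>. (norm (g i tt k \<omega>))\<^sup>2 \<partial>M) \<le> G\<^sup>2"
begin

lemma pw_nonneg: "i < C \<Longrightarrow> 0 \<le> pw p C i"
  using p_pos[of i] by simp

lemma sum_pw: "(\<Sum>i<C. pw p C i) = 1"
  using p_sum by (simp add: pw_def)

definition nbr_weight :: "nat \<Rightarrow> nat \<Rightarrow> real" where
  "nbr_weight i n = p i n / pw p C i"

lemma nbr_weight_nonneg: "i < C \<Longrightarrow> n < C \<Longrightarrow> 0 \<le> nbr_weight i n"
  using p_nonneg[of i n] p_pos[of i] by (simp add: nbr_weight_def)

lemma sum_nbr_weight: "i < C \<Longrightarrow> (\<Sum>n<C. nbr_weight i n) = 1"
  using p_pos[of i] by (simp add: nbr_weight_def pw_def sum_divide_distrib[symmetric])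

lemma u_Suc_eq:
  "i < C \<Longrightarrow> \<omega> \<in> space M \<Longrightarrow> u i (Suc s) \<omega> = (\<Sum>n<C. nbr_weight i n *\<^sub>R w n s E \<omega>)"
  by (simp add: u_next nbr_weight_def scaleR_sum_right)

lemma step_pos: "0 < \<gamma>"
  using L_pos E_pos by (simp add: step)

lemma step_power2: "\<gamma>\<^sup>2 * (real E)\<^sup>2 = 1 / (4 * L\<^sup>2)"
  using L_pos E_pos by (simp add: step power2_eq_square field_simps)

lemma subalgebra_Filt: "subalgebra M (Filt s)"
  using sigma_finite_subalgebra.subalg[OF filt_sub] .

lemma space_Filt [simp]: "space (Filt s) = space M"
  using subalgebra_Filt[of s] by (simp add: subalgebra_def)

lemma measurable_Filt_mono:
  assumes "a \<le> b" and "f \<in> borel_measurable (Filt a)"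
  shows "f \<in> borel_measurable (Filt b)"
proof -
  have "sets (Filt a) \<subseteq> sets (Filt b)"
    using lift_Suc_mono_le[of "\<lambda>s. sets (Filt s)", OF filt_mono \<open>a \<le> b\<close>] .
  then have "subalgebra (Filt b) (Filt a)"
    by (simp add: subalgebra_def)
  then show ?thesis
    using measurable_from_subalg assms(2) by blast
qed

lemma measurable_Filt_M: "f \<in> borel_measurable (Filt a) \<Longrightarrow> f \<in> borel_measurable M"
  using measurable_from_subalg[OF subalgebra_Filt] .

lemma measurable_wbar:
  "(\<And>i. i < C \<Longrightarrow> w i s k \<in> borel_measurable N) \<Longrightarrow> wbar s k \<in> borel_measurable N"
  unfolding wbar_eq[abs_def] by (intro borel_measurable_sum borel_measurable_scaleR) auto

lemma w_measurable_in_round: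
  assumes start: "\<And>n. n < C \<Longrightarrow> w n s 0 \<in> borel_measurable (Filt (s * E))"
    and i: "i < C" and k: "k \<le> E"
  shows "w i s k \<in> borel_measurable (Filt (s * E + k))"
  using k
proof (induction k)
  case 0
  then show ?case using start[OF i] by simp
next
  case (Suc k)
  have [measurable]: "w i s k \<in> borel_measurable (Filt (s * E + Suc k))"
    using Suc by (intro measurable_Filt_mono[OF _ Suc.IH]) auto
  have [measurable]: "g i s k \<in> borel_measurable (Filt (s * E + Suc k))"
    using g_adapted[OF i, of k s] Suc.prems by simp
  have "(\<lambda>\<omega>. w i s k \<omega> - \<gamma> *\<^sub>R g i s k \<omega>) \<in> borel_measurable (Filt (s * E + Suc k))"
    by measurable
  then show ?case
    using Suc.prems by (subst measurable_cong[where g="\<lambda>\<omega>. w i s k \<omega> - \<gamma> *\<^sub>R g i s k \<omega>"])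
      (auto simp: w_step[OF i])
qed

lemma w_measurable:
  assumes "i < C" "k \<le> E"
  shows "w i s k \<in> borel_measurable (Filt (s * E + k))"
proof -
  have "w n s 0 \<in> borel_measurable (Filt (s * E))" if "n < C" for n
    using that
  proof (induction s arbitrary: n)
    case 0
    then show ?case
      by (subst measurable_cong[where g="\<lambda>_. w0"]) (auto simp: w_init)
  next
    case (Suc s)
    have "wbar s E \<in> borel_measurable (Filt (s * E + E))"
      using w_measurable_in_round[OF Suc.IH] by (intro measurable_wbar) auto
    then show ?case
      using Suc.prems by (subst measurable_cong[where g="wbar s E"]) (auto simp: w_round add.commute)
  qed
  then show ?thesis
    using w_measurable_in_round assms by blast
qed

lemma u_measurable:
  assumes i: "i < C"
  shows "u i s \<in> borel_measurable (Filt (s * E))"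
proof (cases s)
  case 0
  then show ?thesis
    using i by (subst measurable_cong[where g="\<lambda>_. w0"]) (auto simp: u_init)
next
  case (Suc r)
  have "(\<lambda>\<omega>. \<Sum>n<C. nbr_weight i n *\<^sub>R w n r E \<omega>) \<in> borel_measurable (Filt (r * E + E))"
    using w_measurable by (intro borel_measurable_sum borel_measurable_scaleR) auto
  then show ?thesis
    using i Suc by (subst measurable_cong[where g="\<lambda>\<omega>. \<Sum>n<C. nbr_weight i n *\<^sub>R w n r E \<omega>"])
      (auto simp: u_Suc_eq add.commute)
qed

lemma gradient_at_wtil_measurable:
  assumes i: "i < C"
  shows "(\<lambda>\<omega>. gF i (wtil i s 0 \<omega>)) \<in> borel_measurable (Filt (s * E))"
proof -
  have [measurable]: "gF i \<in> borel_measurable borel"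
    using lipschitz_on_continuous_on[OF smooth[OF i]] by (rule borel_measurable_continuous_onI)
  note [measurable] = w_measurable[OF i, of 0 s, simplified] u_measurable[OF i, of s]
  show ?thesis
    unfolding wtil_eq by measurable
qed

lemma gradient_at_wtil_second_moment:
  assumes i: "i < C"
  shows integrable_gradient_at_wtil: "integrable M (\<lambda>\<omega>. (norm (gF i (wtil i s 0 \<omega>)))\<^sup>2)"
    and integral_gradient_at_wtil_le: "(\<integral>\<omega>. (norm (gF i (wtil i s 0 \<omega>)))\<^sup>2 \<partial>M) \<le> G\<^sup>2"
proof -
  have E: "0 < E" using E_pos by simp
  have "g i s 0 \<in> borel_measurable M"
    using measurable_Filt_M[OF g_adapted[OF i E]] .
  note cond_exp = cond_exp_power2_norm[OF filt_sub this gradient_at_wtil_measurable[OF i]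
      norm_int[OF i E] var_int[OF i E]]
  show "integrable M (\<lambda>\<omega>. (norm (gF i (wtil i s 0 \<omega>)))\<^sup>2)"
    using cond_exp(1) unbiased[OF i E] by simp
  show "(\<integral>\<omega>. (norm (gF i (wtil i s 0 \<omega>)))\<^sup>2 \<partial>M) \<le> G\<^sup>2"
    using cond_exp(2) unbiased[OF i E] norm_bound[OF i E, of s] by fastforce
qed


lemma w_start_eq_wbar:
  assumes i: "i < C" and \<omega>: "\<omega> \<in> space M"
  shows "w i s 0 \<omega> = wbar s 0 \<omega>"
proof -
  have same_start: "w n s 0 \<omega> = w i s 0 \<omega>" if "n \<in> {..<C}" for n
    using that i \<omega> by (cases s) (simp_all add: w_init w_round)
  have "wbar s 0 \<omega> = (\<Sum>n<C. pw p C n *\<^sub>R w i s 0 \<omega>)"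
    unfolding wbar_eq using same_start by (intro sum.cong) auto
  also have "\<dots> = w i s 0 \<omega>"
    by (simp add: scaleR_sum_left[symmetric] sum_pw)
  finally show ?thesis ..
qed

lemma w_local_steps:
  assumes n: "n < C" and \<omega>: "\<omega> \<in> space M" and "k \<le> E"
  shows "w n s k \<omega> = wbar s 0 \<omega> - \<gamma> *\<^sub>R (\<Sum>j<k. g n s j \<omega>)"
  using \<open>k \<le> E\<close>
proof (induction k)
  case 0
  then show ?case using w_start_eq_wbar[OF n \<omega>] by simp
next
  case (Suc k)
  then show ?case
    by (simp add: w_step[OF n _ \<omega>] algebra_simps)
qed

lemma combination_w_round_end:
  assumes q: "(\<Sum>n<C. q n) = 1" and \<omega>: "\<omega> \<in> space M"
  shows "(\<Sum>n<C. q n *\<^sub>R w n s E \<omega>)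
    = wbar s 0 \<omega> - \<gamma> *\<^sub>R (\<Sum>n<C. q n *\<^sub>R (\<Sum>j<E. g n s j \<omega>))"
proof -
  have "(\<Sum>n<C. q n *\<^sub>R w n s E \<omega>) = (\<Sum>n<C. q n *\<^sub>R (wbar s 0 \<omega> - \<gamma> *\<^sub>R (\<Sum>j<E. g n s j \<omega>)))"
    using w_local_steps[OF _ \<omega>] by (intro sum.cong) auto
  also have "\<dots> = wbar s 0 \<omega> - \<gamma> *\<^sub>R (\<Sum>n<C. q n *\<^sub>R (\<Sum>j<E. g n s j \<omega>))"
    using q by (simp add: scaleR_diff_right sum_subtractf scaleR_sum_left[symmetric]
        scaleR_sum_right mult.commute)
  finally show ?thesis .
qed

lemma wbar_minus_wtil_Suc:
  assumes i: "i < C" and \<omega>: "\<omega> \<in> space M"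
  shows "wbar (Suc s) 0 \<omega> - wtil i (Suc s) 0 \<omega>
    = ((1 - \<beta>) * \<gamma>) *\<^sub>R ((\<Sum>n<C. nbr_weight i n *\<^sub>R (\<Sum>j<E. g n s j \<omega>))
        - (\<Sum>n<C. pw p C n *\<^sub>R (\<Sum>j<E. g n s j \<omega>)))"
proof -
  have "wbar (Suc s) 0 \<omega> = (\<Sum>n<C. pw p C n *\<^sub>R w n s E \<omega>)"
    using w_start_eq_wbar[OF i \<omega>, of "Suc s"] w_round[OF i \<omega>] by (simp add: wbar_eq)
  also have "\<dots> = wbar s 0 \<omega> - \<gamma> *\<^sub>R (\<Sum>n<C. pw p C n *\<^sub>R (\<Sum>j<E. g n s j \<omega>))"
    by (rule combination_w_round_end[OF sum_pw \<omega>])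
  finally have wbar_Suc: "wbar (Suc s) 0 \<omega> = \<dots>" .
  have u_Suc: "u i (Suc s) \<omega> = wbar s 0 \<omega> - \<gamma> *\<^sub>R (\<Sum>n<C. nbr_weight i n *\<^sub>R (\<Sum>j<E. g n s j \<omega>))"
    unfolding u_Suc_eq[OF i \<omega>] by (rule combination_w_round_end[OF sum_nbr_weight[OF i] \<omega>])
  have "wtil i (Suc s) 0 \<omega> = \<beta> *\<^sub>R wbar (Suc s) 0 \<omega> + (1 - \<beta>) *\<^sub>R u i (Suc s) \<omega>"
    using w_start_eq_wbar[OF i \<omega>] by (simp add: wtil_eq)
  then show ?thesis
    unfolding wbar_Suc u_Suc by (simp add: algebra_simps)
qed

definition drift :: "nat \<Rightarrow> nat \<Rightarrow> 'a \<Rightarrow> real" where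
  "drift i t \<omega> = (case t of 0 \<Rightarrow> 0 | Suc s \<Rightarrow>
     2 * \<gamma>\<^sup>2 * real E * (\<Sum>n<C. (nbr_weight i n + pw p C n) * (\<Sum>j<E. (norm (g n s j \<omega>))\<^sup>2)))"

lemma power2_norm_wbar_minus_wtil_le:
  assumes i: "i < C" and \<omega>: "\<omega> \<in> space M"
  shows "(norm (wbar t 0 \<omega> - wtil i t 0 \<omega>))\<^sup>2 \<le> drift i t \<omega>"
proof (cases t)
  case 0
  have "wbar 0 0 \<omega> = w0"
    using w_start_eq_wbar[OF i \<omega>, of 0] w_init[OF i \<omega>] by simp
  then show ?thesis
    by (simp add: 0 drift_def wtil_eq u_init[OF i \<omega>] w_init[OF i \<omega>] algebra_simps)
next
  case (Suc s)
  define U where "U n = (\<Sum>j<E. g n s j \<omega>)" for n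
  define A where "A = (\<Sum>n<C. nbr_weight i n *\<^sub>R U n)"
  define B where "B = (\<Sum>n<C. pw p C n *\<^sub>R U n)"
  have U: "(norm (U n))\<^sup>2 \<le> real E * (\<Sum>j<E. (norm (g n s j \<omega>))\<^sup>2)" for n
    using power2_norm_sum_scaleR_le[of "{..<E}" "\<lambda>_. 1" "\<lambda>j. g n s j \<omega>"] by (simp add: U_def)
  have "(norm (wbar t 0 \<omega> - wtil i t 0 \<omega>))\<^sup>2 = ((1 - \<beta>) * \<gamma>)\<^sup>2 * (norm (A - B))\<^sup>2"
    using wbar_minus_wtil_Suc[OF i \<omega>] beta step_pos
    by (simp add: Suc A_def B_def U_def power_mult_distrib)
  also have "\<dots> \<le> \<gamma>\<^sup>2 * (2 * (norm A)\<^sup>2 + 2 * (norm B)\<^sup>2)"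
    using beta step_pos power2_norm_diff_le[of A B]
    by (intro mult_mono) (auto simp: power_mult_distrib power_le_one)
  also have "\<dots> \<le> \<gamma>\<^sup>2 * (2 * (\<Sum>n<C. nbr_weight i n * (norm (U n))\<^sup>2)
      + 2 * (\<Sum>n<C. pw p C n * (norm (U n))\<^sup>2))"
    using power2_norm_sum_scaleR_le[of "{..<C}" "nbr_weight i" U] sum_nbr_weight[OF i]
      power2_norm_sum_scaleR_le[of "{..<C}" "pw p C" U] sum_pw nbr_weight_nonneg[OF i] pw_nonneg
    by (intro mult_left_mono add_mono) (auto simp: A_def B_def)
  also have "\<dots> = 2 * \<gamma>\<^sup>2 * (\<Sum>n<C. (nbr_weight i n + pw p C n) * (norm (U n))\<^sup>2)"
    by (simp add: distrib_left distrib_right sum.distrib sum_distrib_left mult_ac)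
  also have "\<dots> \<le> 2 * \<gamma>\<^sup>2 * (\<Sum>n<C. (nbr_weight i n + pw p C n) * (real E * (\<Sum>j<E. (norm (g n s j \<omega>))\<^sup>2)))"
    using U nbr_weight_nonneg[OF i] pw_nonneg by (intro mult_left_mono sum_mono) auto
  also have "\<dots> = drift i t \<omega>"
    by (simp add: drift_def Suc sum_distrib_left mult_ac)
  finally show ?thesis .
qed


lemma drift_first_moment:
  assumes i: "i < C"
  shows integrable_drift: "integrable M (drift i t)"
    and integral_drift_le: "(\<integral>\<omega>. drift i t \<omega> \<partial>M) \<le> G\<^sup>2 / L\<^sup>2"
proof -
  have "integrable M (drift i t) \<and> (\<integral>\<omega>. drift i t \<omega> \<partial>M) \<le> G\<^sup>2 / L\<^sup>2"
  proof (cases t)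
    case 0
    then have "drift i t = (\<lambda>_. 0)"
      by (simp add: drift_def fun_eq_iff)
    then show ?thesis
      by simp
  next
    case (Suc s)
    define c where "c n = nbr_weight i n + pw p C n" for n
    have c_nonneg: "0 \<le> c n" if "n < C" for n
      using nbr_weight_nonneg[OF i that] pw_nonneg[OF that] by (simp add: c_def)
    have drift_Suc: "drift i t
        = (\<lambda>\<omega>. 2 * \<gamma>\<^sup>2 * real E * (\<Sum>n<C. c n * (\<Sum>j<E. (norm (g n s j \<omega>))\<^sup>2)))"
      by (simp add: drift_def Suc c_def fun_eq_iff)
    have round_moment: "(\<Sum>j<E. \<integral>\<omega>. (norm (g n s j \<omega>))\<^sup>2 \<partial>M) \<le> real E * G\<^sup>2" if "n < C" for n
      using sum_mono[of "{..<E}" _ "\<lambda>_. G\<^sup>2"] norm_bound[OF that] by simp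
    have round_integrable: "integrable M (\<lambda>\<omega>. \<Sum>j<E. (norm (g n s j \<omega>))\<^sup>2)" if "n < C" for n
      using norm_int[OF that] by (intro Bochner_Integration.integrable_sum) auto
    have drift_integrable: "integrable M (drift i t)"
      unfolding drift_Suc using norm_int
      by (intro integrable_mult_right Bochner_Integration.integrable_sum) auto
    have "(\<integral>\<omega>. drift i t \<omega> \<partial>M)
        = 2 * \<gamma>\<^sup>2 * real E * (\<Sum>n<C. c n * (\<integral>\<omega>. (\<Sum>j<E. (norm (g n s j \<omega>))\<^sup>2) \<partial>M))"
      unfolding drift_Suc using round_integrable by (simp add: integral_sum)
    also have "\<dots> = 2 * \<gamma>\<^sup>2 * real E * (\<Sum>n<C. c n * (\<Sum>j<E. \<integral>\<omega>. (norm (g n s j \<omega>))\<^sup>2 \<partial>M))"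
      using norm_int by (simp add: integral_sum)
    also have "\<dots> \<le> 2 * \<gamma>\<^sup>2 * real E * (\<Sum>n<C. c n * (real E * G\<^sup>2))"
      using round_moment c_nonneg by (intro mult_left_mono sum_mono) auto
    also have "\<dots> = 4 * (\<gamma>\<^sup>2 * (real E)\<^sup>2) * G\<^sup>2"
      using sum_nbr_weight[OF i] sum_pw
      by (simp add: c_def sum_distrib_right[symmetric] sum.distrib power2_eq_square)
    also have "\<dots> = G\<^sup>2 / L\<^sup>2"
      by (simp add: step_power2)
    finally show ?thesis
      using drift_integrable by simp
  qed
  then show "integrable M (drift i t)" "(\<integral>\<omega>. drift i t \<omega> \<partial>M) \<le> G\<^sup>2 / L\<^sup>2"
    by simp_all
qed

definition gap_bound :: "nat \<Rightarrow> 'a \<Rightarrow> real" where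
  "gap_bound t \<omega> = (\<Sum>i<C. pw p C i * ((norm (gF i (wtil i t 0 \<omega>)))\<^sup>2 + L\<^sup>2 * drift i t \<omega>)) / \<mu>"

lemma objective_gap_le_gap_bound:
  assumes \<omega>: "\<omega> \<in> space M"
  shows "Fglob p C Fs (wbar t 0 \<omega>) - Fglob p C Fs x \<le> gap_bound t \<omega>"
proof -
  have "Fglob p C Fs (wbar t 0 \<omega>) - Fglob p C Fs x
      \<le> (\<Sum>i<C. pw p C i * ((norm (gF i (wtil i t 0 \<omega>)))\<^sup>2
          + L\<^sup>2 * (norm (wbar t 0 \<omega> - wtil i t 0 \<omega>))\<^sup>2)) / \<mu>"
    unfolding Fglob_def using sconv smooth pw_nonneg sum_pw mu_pos
    by (intro mixture_gap_le_shifted_gradients) auto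
  also have "\<dots> \<le> gap_bound t \<omega>"
    unfolding gap_bound_def using power2_norm_wbar_minus_wtil_le[OF _ \<omega>] pw_nonneg mu_pos
    by (intro divide_right_mono sum_mono mult_left_mono add_left_mono) auto
  finally show ?thesis .
qed

lemma gap_bound_first_moment:
  shows integrable_gap_bound: "integrable M (gap_bound t)"
    and integral_gap_bound_le: "(\<integral>\<omega>. gap_bound t \<omega> \<partial>M) \<le> 2 * G\<^sup>2 / \<mu>"
proof -
  note integrable_terms = integrable_gradient_at_wtil integrable_drift
  show "integrable M (gap_bound t)"
    unfolding gap_bound_def[abs_def] using integrable_terms
    by (intro integrable_divide_zero Bochner_Integration.integrable_sum integrable_mult_right
        Bochner_Integration.integrable_add) auto
  have "(\<integral>\<omega>. gap_bound t \<omega> \<partial>M) = (\<Sum>i<C. pw p C i * ((\<integral>\<omega>. (norm (gF i (wtil i t 0 \<omega>)))\<^sup>2 \<partial>M)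
      + L\<^sup>2 * (\<integral>\<omega>. drift i t \<omega> \<partial>M))) / \<mu>"
    unfolding gap_bound_def using integrable_terms by (simp add: integral_sum)
  also have "\<dots> \<le> (\<Sum>i<C. pw p C i * (G\<^sup>2 + L\<^sup>2 * (G\<^sup>2 / L\<^sup>2))) / \<mu>"
    using integral_gradient_at_wtil_le integral_drift_le pw_nonneg mu_pos
    by (intro divide_right_mono sum_mono mult_left_mono add_mono) auto
  also have "\<dots> = 2 * G\<^sup>2 / \<mu>"
    using L_pos sum_pw by (simp add: sum_distrib_right[symmetric])
  finally show "(\<integral>\<omega>. gap_bound t \<omega> \<partial>M) \<le> 2 * G\<^sup>2 / \<mu>" .
qed

lemma objective_measurable: "(\<lambda>\<omega>. Fglob p C Fs (wbar t 0 \<omega>)) \<in> borel_measurable M"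
  unfolding Fglob_def
proof (rule borel_measurable_sum)
  fix i assume "i \<in> {..<C}"
  then have "continuous_on UNIV (Fs i)"
    using grad unfolding gderiv_def
    by (intro continuous_at_imp_continuous_on) (blast intro: has_derivative_continuous)
  then have [measurable]: "Fs i \<in> borel_measurable borel"
    by (rule borel_measurable_continuous_onI)
  have [measurable]: "wbar t 0 \<in> borel_measurable M"
    using w_measurable measurable_Filt_M by (intro measurable_wbar) blast
  show "(\<lambda>\<omega>. pw p C i * Fs i (wbar t 0 \<omega>)) \<in> borel_measurable M"
    by measurable
qed

lemma objective_lower_bound:
  "Fglob p C Fs 0 - (norm (\<Sum>i<C. pw p C i *\<^sub>R gF i 0))\<^sup>2 / (2 * \<mu>) \<le> Fglob p C Fs y"
  using strongly_convex_mixture_gap_le[of "{..<C}" \<mu> Fs gF "pw p C" 0 y] sconv pw_nonneg sum_pw mu_pos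
  unfolding Fglob_def by auto

lemma integrable_objective: "integrable M (\<lambda>\<omega>. Fglob p C Fs (wbar t 0 \<omega>))"
proof (rule Bochner_Integration.integrable_bound)
  define c where "c = \<bar>Fglob p C Fs 0\<bar> + (norm (\<Sum>i<C. pw p C i *\<^sub>R gF i 0))\<^sup>2 / (2 * \<mu>)"
  show "integrable M (\<lambda>\<omega>. c + gap_bound t \<omega>)"
    using integrable_gap_bound by simp
  show "AE \<omega> in M. norm (Fglob p C Fs (wbar t 0 \<omega>)) \<le> norm (c + gap_bound t \<omega>)"
  proof (rule AE_I2)
    fix \<omega> assume \<omega>: "\<omega> \<in> space M"
    have "0 \<le> gap_bound t \<omega>"
      \<comment> \<open>compare \<open>wbar t 0 \<omega>\<close> with itself\<close>
      using objective_gap_le_gap_bound[OF \<omega>, of t "wbar t 0 \<omega>"] by simp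
    moreover have "0 \<le> (norm (\<Sum>i<C. pw p C i *\<^sub>R gF i 0))\<^sup>2 / (2 * \<mu>)"
      using mu_pos by simp
    ultimately have "\<bar>Fglob p C Fs (wbar t 0 \<omega>)\<bar> \<le> c + gap_bound t \<omega>"
      using objective_gap_le_gap_bound[OF \<omega>, of t 0] objective_lower_bound[of "wbar t 0 \<omega>"]
      unfolding c_def abs_le_iff by linarith
    then show "norm (Fglob p C Fs (wbar t 0 \<omega>)) \<le> norm (c + gap_bound t \<omega>)"
      by simp
  qed
qed (rule objective_measurable)

lemma expected_objective_gap_le:
  "(\<integral>\<omega>. Fglob p C Fs (wbar t 0 \<omega>) \<partial>M) - Fglob p C Fs x \<le> 2 * G\<^sup>2 / \<mu>"
proof -
  have "(\<integral>\<omega>. Fglob p C Fs (wbar t 0 \<omega>) \<partial>M) - Fglob p C Fs x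
      = (\<integral>\<omega>. Fglob p C Fs (wbar t 0 \<omega>) - Fglob p C Fs x \<partial>M)"
    using integrable_objective by (simp add: prob_space)
  also have "\<dots> \<le> (\<integral>\<omega>. gap_bound t \<omega> \<partial>M)"
    using integrable_objective integrable_gap_bound objective_gap_le_gap_bound
    by (intro integral_mono) auto
  also have "\<dots> \<le> 2 * G\<^sup>2 / \<mu>"
    by (rule integral_gap_bound_le)
  finally show ?thesis .
qed

lemma strong_convexity_le_smoothness: "\<mu> \<le> L"
proof -
  have "0 < C"
    using p_sum by (cases C) auto
  then show ?thesis
    using strongly_convex_le_lipschitz_gradient[OF sconv smooth] by blast
qed

lemma contraction_factor_nonneg: "0 \<le> (1 - \<mu> / ((\<beta> + 2) * L)) ^ t"
proof -
  have "0 \<le> \<beta> * L"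
    using beta L_pos by simp
  then have "\<mu> \<le> (\<beta> + 2) * L"
    using strong_convexity_le_smoothness L_pos by (simp add: distrib_right)
  then show ?thesis
    using L_pos beta by (simp add: pos_divide_le_eq)
qed

end

theorem theorem3:
  fixes M :: "'a measure" and Filt :: "nat \<Rightarrow> 'a measure"
    and C E :: nat and p :: "nat \<Rightarrow> nat \<Rightarrow> real"
    and Fs :: "nat \<Rightarrow> 'v::euclidean_space \<Rightarrow> real" and gF :: "nat \<Rightarrow> 'v \<Rightarrow> 'v"
    and L \<mu> \<sigma> G \<beta> \<gamma> :: real
    and w0 wstar :: 'v and ws :: "nat \<Rightarrow> 'v"
    and w g :: "nat \<Rightarrow> nat \<Rightarrow> nat \<Rightarrow> 'a \<Rightarrow> 'v" and u :: "nat \<Rightarrow> nat \<Rightarrow> 'a \<Rightarrow> 'v"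
    and t :: nat
  defines "wbar \<equiv> \<lambda>tt k \<omega>. \<Sum>i<C. pw p C i *\<^sub>R w i tt k \<omega>"
    and "wtil \<equiv> \<lambda>i tt k \<omega>. \<beta> *\<^sub>R w i tt k \<omega> + (1 - \<beta>) *\<^sub>R u i tt \<omega>"
  assumes
    \<comment> \<open>similarity weights\<close>
    p_nonneg: "\<And>i n. i < C \<Longrightarrow> n < C \<Longrightarrow> p i n \<ge> 0"
    and p_sym: "\<And>i n. i < C \<Longrightarrow> n < C \<Longrightarrow> p i n = p n i"
    and p_diag: "\<And>i. i < C \<Longrightarrow> p i i = 0"
    and p_sum: "(\<Sum>i<C. \<Sum>n<C. p i n) = 1"
    and p_pos: "\<And>i. i < C \<Longrightarrow> pw p C i > 0"
    \<comment> \<open>parameters\<close>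
    and E_pos: "E \<ge> 1"
    and beta: "0 < \<beta>" "\<beta> < 1"
    and L_pos: "L > 0" and mu_pos: "\<mu> > 0"
    and step: "\<gamma> = 1 / (2 * L * real E)"
    \<comment> \<open>smoothness and strong convexity\<close>
    and grad: "\<And>i x. i < C \<Longrightarrow> GDERIV (Fs i) x :> gF i x"
    and smooth: "\<And>i. i < C \<Longrightarrow> L-lipschitz_on UNIV (gF i)"
    and sconv: "\<And>i. i < C \<Longrightarrow> strongly_convex_grad \<mu> (Fs i) (gF i)"
    \<comment> \<open>minimizers\<close>
    and wstar_min: "\<And>x. Fglob p C Fs wstar \<le> Fglob p C Fs x"
    and ws_min: "\<And>i x. i < C \<Longrightarrow> Fs i (ws i) \<le> Fs i x"
    \<comment> \<open>algorithm (pointwise in the sample \<omega>)\<close>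
    and u_init: "\<And>i \<omega>. i < C \<Longrightarrow> \<omega> \<in> space M \<Longrightarrow> u i 0 \<omega> = w0"
    and u_next: "\<And>i tt \<omega>. i < C \<Longrightarrow> \<omega> \<in> space M \<Longrightarrow>
        u i (Suc tt) \<omega> = (1 / pw p C i) *\<^sub>R (\<Sum>n<C. p i n *\<^sub>R w n tt E \<omega>)"
    and w_init: "\<And>i \<omega>. i < C \<Longrightarrow> \<omega> \<in> space M \<Longrightarrow> w i 0 0 \<omega> = w0"
    and w_round: "\<And>i tt \<omega>. i < C \<Longrightarrow> \<omega> \<in> space M \<Longrightarrow> w i (Suc tt) 0 \<omega> = wbar tt E \<omega>"
    and w_step: "\<And>i tt k \<omega>. i < C \<Longrightarrow> k < E \<Longrightarrow> \<omega> \<in> space M \<Longrightarrow>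
        w i tt (Suc k) \<omega> = w i tt k \<omega> - \<gamma> *\<^sub>R g i tt k \<omega>"
    \<comment> \<open>probability space and filtration of the past (global step index tt*E+k)\<close>
    and prob: "prob_space M"
    and filt_sub: "\<And>s. sigma_finite_subalgebra M (Filt s)"
    and filt_mono: "\<And>s. sets (Filt s) \<subseteq> sets (Filt (Suc s))"
    and g_adapted: "\<And>i tt k. i < C \<Longrightarrow> k < E \<Longrightarrow>
        g i tt k \<in> borel_measurable (Filt (Suc (tt * E + k)))"
    \<comment> \<open>unbiasedness given the past\<close>
    and unbiased: "\<And>i tt k b. i < C \<Longrightarrow> k < E \<Longrightarrow> b \<in> Basis \<Longrightarrow>
        AE \<omega> in M. real_cond_exp M (Filt (tt * E + k)) (\<lambda>\<omega>. inner (g i tt k \<omega>) b) \<omega>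
                  = inner (gF i (wtil i tt k \<omega>)) b"
    \<comment> \<open>independence across clients given the past\<close>
    and indep: "\<And>tt k. k < E \<Longrightarrow>
        cond_indep_vars M (Filt (tt * E + k)) borel (\<lambda>i. g i tt k) {..<C}"
    \<comment> \<open>bounded variance and bounded stochastic gradient norm\<close>
    and var_int: "\<And>i tt k. i < C \<Longrightarrow> k < E \<Longrightarrow>
        integrable M (\<lambda>\<omega>. (norm (g i tt k \<omega> - gF i (wtil i tt k \<omega>)))\<^sup>2)"
    and var_bound: "\<And>i tt k. i < C \<Longrightarrow> k < E \<Longrightarrow>
        (\<integral>\<omega>. (norm (g i tt k \<omega> - gF i (wtil i tt k \<omega>)))\<^sup>2 \<partial>M) \<le> \<sigma>\<^sup>2"
    and norm_int: "\<And>i tt k. i < C \<Longrightarrow> k < E \<Longrightarrow>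
        integrable M (\<lambda>\<omega>. (norm (g i tt k \<omega>))\<^sup>2)"
    and norm_bound: "\<And>i tt k. i < C \<Longrightarrow> k < E \<Longrightarrow>
        (\<integral>\<omega>. (norm (g i tt k \<omega>))\<^sup>2 \<partial>M) \<le> G\<^sup>2"
  shows "integrable M (\<lambda>\<omega>. Fglob p C Fs (wbar t 0 \<omega>)) \<and>
    (\<integral>\<omega>. Fglob p C Fs (wbar t 0 \<omega>) \<partial>M) - Fglob p C Fs wstar
      \<le> L * (Fglob p C Fs w0 - Fglob p C Fs wstar) / \<mu> * (1 - \<mu> / ((\<beta> + 2) * L)) ^ t
        + (\<Sum>i<C. (pw p C i)\<^sup>2) * \<sigma>\<^sup>2 / (4 * \<mu>)
        + 3 * L * (Fglob p C Fs wstar - (\<Sum>i<C. pw p C i * Fs i (ws i))) / (2 * \<mu>)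
        + 2 * (4 + (1 - \<beta>)\<^sup>2 + 8 * (1 - 1 / \<beta>)\<^sup>2) * (real E)\<^sup>2 * G\<^sup>2 / \<mu>
        + \<beta> * (1 - \<beta>) * real E * G\<^sup>2 / (8 * L)"
proof -
  interpret fedavg: perturbed_fedavg M Filt C E p Fs gF L \<mu> G \<beta> \<gamma> w0 w g u wbar wtil
    by (intro perturbed_fedavg.intro[OF prob] perturbed_fedavg_axioms.intro)
      (use assms in \<open>simp_all add: wbar_def wtil_def\<close>)
  have "0 \<le> L * (Fglob p C Fs w0 - Fglob p C Fs wstar) / \<mu> * (1 - \<mu> / ((\<beta> + 2) * L)) ^ t"
    using fedavg.contraction_factor_nonneg wstar_min[of w0] L_pos mu_pos by simp
  moreover have "0 \<le> (\<Sum>i<C. (pw p C i)\<^sup>2) * \<sigma>\<^sup>2 / (4 * \<mu>)"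
    using mu_pos by (simp add: sum_nonneg)
  moreover have "(\<Sum>i<C. pw p C i * Fs i (ws i)) \<le> Fglob p C Fs wstar"
    unfolding Fglob_def using ws_min fedavg.pw_nonneg by (intro sum_mono mult_left_mono) auto
  then have "0 \<le> 3 * L * (Fglob p C Fs wstar - (\<Sum>i<C. pw p C i * Fs i (ws i))) / (2 * \<mu>)"
    using L_pos mu_pos by simp
  moreover have "1 * 1 \<le> (4 + (1 - \<beta>)\<^sup>2 + 8 * (1 - 1 / \<beta>)\<^sup>2) * (real E)\<^sup>2"
    using E_pos by (intro mult_mono) auto
  then have "2 * G\<^sup>2 * 1 / \<mu>
      \<le> 2 * G\<^sup>2 * ((4 + (1 - \<beta>)\<^sup>2 + 8 * (1 - 1 / \<beta>)\<^sup>2) * (real E)\<^sup>2) / \<mu>"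
    using mu_pos by (intro divide_right_mono mult_left_mono) auto
  then have "2 * G\<^sup>2 / \<mu> \<le> 2 * (4 + (1 - \<beta>)\<^sup>2 + 8 * (1 - 1 / \<beta>)\<^sup>2) * (real E)\<^sup>2 * G\<^sup>2 / \<mu>"
    by (simp only: mult_1_right ac_simps)
  moreover have "0 \<le> \<beta> * (1 - \<beta>) * real E * G\<^sup>2 / (8 * L)"
    using beta L_pos by simp
  ultimately show ?thesis
    using fedavg.integrable_objective fedavg.expected_objective_gap_le[of t wstar]
    by (intro conjI) (blast, linarith)
qed

end
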